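(* Let $\mathbb{R}^n$ be endowed with the $\ell_1$ norm, let $A\in\mathbb{R}^{m\times n}$ have at least two different columns, and let $f:\mathbb{R}^m\to\mathbb{R}\cup\{\infty\}$ be a differentiable convex function with $\mathrm{conv}(A)\subseteq\mathrm{dom}(f)$ and $\frac{L_{f,A}}{\mu^\star_{f,A}}<\infty$. Consider the Frank–Wolfe algorithm with away steps (described below) with step sizes $\alpha_k=\min\left\{\alpha_{\max},-\frac{\langle\nabla f(u_k),v\rangle}{4L_{f,A}}\right\}$. If $x_0$ is a vertex of $\Delta_{n-1}$, then for all $k\ge0$ \[ f(u_k)-f^\star\le\left(1-\min\left\{\frac{\mu^\star_{f,A}}{16L_{f,A}},\frac12\right\}\right)^{k/2}(f(u_0)-f^\star). \]
   Context: $\Delta_{n-1}=\{x\in\mathbb{R}^n_+:\sum_ix_i=1\}$, $e_i$ standard basis vectors, $a_1,\dots,a_n$ the columns of $A$, $\mathrm{conv}(A)=\{Ax:x\in\Delta_{n-1}\}$; for $x\in\Delta_{n-1}$, $I(x)=\{i:x_i>0\}$. For $u\in\mathrm{conv}(A)$, $Z(u)=\{z\in\Delta_{n-1}:Az=u\}$, $\mathrm{dist}(x,Z(u))=\min_{z\in Z(u)}\|x-z\|_1$, and $L_{f,A}=\sup_{u\in\mathrm{conv}(A),\,x\in\Delta_{n-1}\setminus Z(u)}\frac{2(f(Ax)-f(u)-\langle\nabla f(u),Ax-u\rangle)}{\mathrm{dist}(x,Z(u))^2}$. $f^\star=\min_{x\in\Delta_{n-1}}f(Ax)$, $Z^\star=\{z\in\Delta_{n-1}:f(Az)=f^\star\}$,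 $\mu^\star_{f,A}=\inf_{x\in\Delta_{n-1}\setminus Z^\star}\frac{2(f(Ax)-f^\star)}{\mathrm{dist}(x,Z^\star)^2}$ with $\mathrm{dist}(x,Z^\star)=\min_{z\in Z^\star}\|x-z\|_1$. Algorithm: pick $x_0\in\Delta_{n-1}$, $u_0=Ax_0$. For $k=0,1,\dots$: let $j\in\operatorname{argmin}_{i}\langle\nabla f(u_k),a_i\rangle$, $\ell\in\operatorname{argmax}_{i\in I(x_k)}\langle\nabla f(u_k),a_i\rangle$. If $\langle\nabla f(u_k),a_j-u_k\rangle<\langle\nabla f(u_k),u_k-a_\ell\rangle$ or $|I(x_k)|=1$, set $v=a_j-u_k$, $w=e_j-x_k$, $\alpha_{\max}=1$; otherwise set $v=u_k-a_\ell$, $w=x_k-e_\ell$, $\alpha_{\max}=\frac{\langle e_\ell,x_k\rangle}{1-\langle e_\ell,x_k\rangle}$. Then $x_{k+1}=x_k+\alpha_kw$, $u_{k+1}=u_k+\alpha_kv=Ax_{k+1}$. *)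

theory Defs
  imports "HOL-Analysis.Analysis"
begin

text \<open>Vectors in R^n are real^'n; matrices A in R^(m x n) are real^'n^'m,
  the i-th column of A is column i A, and e_i is axis i 1.\<close>

definition std_simplex :: "(real^'n::finite) set" where
  "std_simplex = {x. (\<forall>i. 0 \<le> x$i) \<and> (\<Sum>i\<in>UNIV. x$i) = 1}"

definition convA :: "real^'n::finite^'m::finite \<Rightarrow> (real^'m) set" where
  "convA A = (\<lambda>x. A *v x) ` std_simplex"

definition supp :: "real^'n::finite \<Rightarrow> 'n set" where
  "supp x = {i. x$i > 0}"

definition norm1 :: "real^'n::finite \<Rightarrow> real" where
  "norm1 x = (\<Sum>i\<in>UNIV. \<bar>x$i\<bar>)"

definition dist1 :: "real^'n::finite \<Rightarrow> (real^'n) set \<Rightarrow> real" where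
  "dist1 x S = Inf ((\<lambda>z. norm1 (x - z)) ` S)"

definition Zset :: "real^'n::finite^'m::finite \<Rightarrow> real^'m \<Rightarrow> (real^'n) set" where
  "Zset A u = {z \<in> std_simplex. A *v z = u}"

definition L_fA :: "real^'n::finite^'m::finite \<Rightarrow> (real^'m \<Rightarrow> real) \<Rightarrow> (real^'m \<Rightarrow> real^'m) \<Rightarrow> ereal" where
  "L_fA A f df = (SUP u\<in>convA A. SUP x\<in>std_simplex - Zset A u.
      ereal (2 * (f (A *v x) - f u - df u \<bullet> (A *v x - u)) / (dist1 x (Zset A u))\<^sup>2))"

definition fstar :: "real^'n::finite^'m::finite \<Rightarrow> (real^'m \<Rightarrow> real) \<Rightarrow> real" where
  "fstar A f = Inf ((\<lambda>x. f (A *v x)) ` std_simplex)"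

definition Zstar :: "real^'n::finite^'m::finite \<Rightarrow> (real^'m \<Rightarrow> real) \<Rightarrow> (real^'n) set" where
  "Zstar A f = {z \<in> std_simplex. f (A *v z) = fstar A f}"

definition mu_star :: "real^'n::finite^'m::finite \<Rightarrow> (real^'m \<Rightarrow> real) \<Rightarrow> ereal" where
  "mu_star A f = (INF x\<in>std_simplex - Zstar A f.
      ereal (2 * (f (A *v x) - fstar A f) / (dist1 x (Zstar A f))\<^sup>2))"

text \<open>One iteration of Frank-Wolfe with away steps, given the current iterate x,
  the chosen indices j (Frank-Wolfe vertex) and l (away vertex), and the constant L.\<close>
definition fw_step :: "real^'n::finite^'m::finite \<Rightarrow> (real^'m \<Rightarrow> real^'m) \<Rightarrow> real
    \<Rightarrow> real^'n \<Rightarrow> 'n \<Rightarrow> 'n \<Rightarrow> real^'n" where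
  "fw_step A df L x j l =
    (let u = A *v x; g = df u;
         fw = (g \<bullet> (column j A - u) < g \<bullet> (u - column l A) \<or> card (supp x) = 1);
         v = (if fw then column j A - u else u - column l A);
         w = (if fw then axis j 1 - x else x - axis l 1);
         amax = (if fw then 1 else x$l / (1 - x$l));
         alpha = min amax (- (g \<bullet> v) / (4 * L))
     in x + alpha *\<^sub>R w)"

end

theory Submission
  imports Defs
begin

text \<open>Every step decreases \<open>f\<close>. The gain \<open>-\<langle>\<nabla>f(u), v\<rangle>\<close> of the chosen direction is at least
  half the spread of \<open>\<langle>\<nabla>f(u), a\<^sub>i\<rangle>\<close> between the Frank-Wolfe vertex and the away vertex;
  pairing the positive and negative parts of \<open>x - z\<close> for a minimiser \<open>z\<close> then bounds the gap
  \<open>f(u) - f\<^sup>\<star>\<close> by \<open>\<parallel>x - z\<parallel>\<^sub>1\<close> times the gain, and sharpness turns this into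
  \<open>\<mu> (f(u) - f\<^sup>\<star>) \<le> 2 gain\<^sup>2\<close>. By smoothness an uncapped step decreases \<open>f\<close> by
  \<open>gain\<^sup>2 / (8L)\<close>, a capped Frank-Wolfe step halves the gap, so only away steps that remove
  a vertex from the support may fail to contract. As \<open>x\<^sub>0\<close> is a vertex and the support
  grows by at most one per step, at most half of all steps are of this kind.\<close>

lemma convex_on_gradient_inequality:
  fixes f :: "'a::real_inner \<Rightarrow> real"
  assumes f: "convex_on D f" and df: "(f has_derivative (\<lambda>h. g \<bullet> h)) (at u)"
    and u: "u \<in> D" and y: "y \<in> D"
  shows "f u + g \<bullet> (y - u) \<le> f y"
proof -
  define \<phi> where "\<phi> t = f (u + t *\<^sub>R (y - u))" for t :: real
  have "((\<lambda>t. u + t *\<^sub>R (y - u)) has_derivative (\<lambda>t. t *\<^sub>R (y - u))) (at 0)"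
    by (auto intro!: derivative_eq_intros)
  moreover have "(f has_derivative (\<lambda>h. g \<bullet> h)) (at (u + 0 *\<^sub>R (y - u)))"
    using df by simp
  ultimately have "((f \<circ> (\<lambda>t. u + t *\<^sub>R (y - u))) has_derivative
      (\<lambda>h. g \<bullet> h) \<circ> (\<lambda>t. t *\<^sub>R (y - u))) (at 0)"
    by (rule diff_chain_at)
  then have "(\<phi> has_derivative (\<lambda>t. g \<bullet> (y - u) * t)) (at 0)"
    by (simp add: \<phi>_def[abs_def] o_def mult.commute)
  then have "((\<lambda>t. (\<phi> t - \<phi> 0) / t) \<longlongrightarrow> g \<bullet> (y - u)) (at_right 0)"
    unfolding has_field_derivative_def[symmetric] DERIV_def
    by (auto intro: tendsto_mono[OF at_le])
  moreover have "(\<phi> t - \<phi> 0) / t \<le> \<phi> 1 - \<phi> 0" if "t \<in> {0<..<1}" for t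
  proof -
    from that convex_onD[OF f, of t u y] u y have "\<phi> t \<le> (1 - t) * \<phi> 0 + t * \<phi> 1"
      by (simp add: \<phi>_def algebra_simps)
    then have "\<phi> t - \<phi> 0 \<le> (\<phi> 1 - \<phi> 0) * t" by (simp add: algebra_simps)
    with that show ?thesis by (simp add: pos_divide_le_eq)
  qed
  then have "\<forall>\<^sub>F t in at_right 0. (\<phi> t - \<phi> 0) / t \<le> \<phi> 1 - \<phi> 0"
    using eventually_at_right_real[of 0 1] by (auto elim: eventually_mono)
  ultimately have "g \<bullet> (y - u) \<le> \<phi> 1 - \<phi> 0"
    by (rule tendsto_upperbound) simp
  then show ?thesis by (simp add: \<phi>_def)
qed

lemma convex_std_simplex: "convex (std_simplex :: (real^'n::finite) set)"
  unfolding std_simplex_def convex_def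
  by (auto simp: sum.distrib sum_distrib_left[symmetric])

lemma compact_std_simplex: "compact (std_simplex :: (real^'n::finite) set)"
proof (rule compact_eq_bounded_closed[THEN iffD2, OF conjI])
  have "norm x \<le> 1" if "x \<in> std_simplex" for x :: "real^'n"
    using norm_le_l1_cart[of x] that by (simp add: std_simplex_def)
  then show "bounded (std_simplex :: (real^'n) set)"
    by (auto simp: bounded_iff)
  have "std_simplex = {x::real^'n. \<forall>i. 0 \<le> x$i} \<inter> {x. (\<Sum>i\<in>UNIV. x$i) = 1}"
    unfolding std_simplex_def by auto
  also have "closed \<dots>"
    by (intro closed_Int closed_Collect_all closed_Collect_le closed_Collect_eq continuous_intros)
  finally show "closed (std_simplex :: (real^'n) set)" .
qed

lemma axis_in_std_simplex: "axis i 1 \<in> (std_simplex :: (real^'n::finite) set)"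
  unfolding std_simplex_def by (auto simp: axis_def)

lemma supp_axis: "supp (axis i 1 :: real^'n::finite) = {i}"
  unfolding supp_def by (auto simp: axis_def)

lemma std_simplex_sum_supp:
  assumes "x \<in> std_simplex" shows "(\<Sum>i\<in>supp x. x$i) = 1"
proof -
  have "(\<Sum>i\<in>supp x. x$i) = (\<Sum>i\<in>UNIV. x$i)"
    using assms by (intro sum.mono_neutral_left) (auto simp: std_simplex_def supp_def order_less_le)
  with assms show ?thesis by (simp add: std_simplex_def)
qed

lemma card_supp_pos: "x \<in> std_simplex \<Longrightarrow> 0 < card (supp x)"
  using std_simplex_sum_supp[of x] by (auto simp: card_gt_0_iff)

lemma std_simplex_eq_axis:
  assumes x: "x \<in> std_simplex" and "1 \<le> x$l"
  shows "x = axis l 1"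
proof -
  have "x$l + (\<Sum>i\<in>UNIV - {l}. x$i) = 1"
    using x by (simp add: std_simplex_def sum.remove[of UNIV l])
  moreover have "0 \<le> x$i" for i using x by (simp add: std_simplex_def)
  ultimately have "x$l = 1" "(\<Sum>i\<in>UNIV - {l}. x$i) = 0"
    using \<open>1 \<le> x$l\<close> sum_nonneg[of "UNIV - {l}" "\<lambda>i. x$i"] by simp_all
  with \<open>\<And>i. 0 \<le> x$i\<close> have "x$l = 1" "\<forall>i\<in>UNIV - {l}. x$i = 0"
    by (simp_all add: sum_nonneg_eq_0_iff)
  then show ?thesis by (auto simp: vec_eq_iff axis_def)
qed

lemma std_simplex_supp_singleton:
  assumes "x \<in> std_simplex" "supp x = {l}" shows "x = axis l 1"
  using std_simplex_sum_supp[OF assms(1)] assms by (intro std_simplex_eq_axis) auto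

lemma norm1_nonneg: "0 \<le> norm1 x"
  unfolding norm1_def by (simp add: sum_nonneg)

lemma norm1_eq_0_iff: "norm1 x = 0 \<longleftrightarrow> x = 0"
  unfolding norm1_def by (simp add: sum_nonneg_eq_0_iff vec_eq_iff)

lemma norm1_diff_le: "norm1 (x - y) \<le> norm1 x + norm1 y"
  unfolding norm1_def by (simp add: sum.distrib[symmetric] sum_mono abs_triangle_ineq4)

lemma norm1_scaleR: "norm1 (c *\<^sub>R x) = \<bar>c\<bar> * norm1 x"
  unfolding norm1_def by (simp add: abs_mult sum_distrib_left)

lemma norm1_std_simplex: "x \<in> std_simplex \<Longrightarrow> norm1 x = 1"
  unfolding norm1_def std_simplex_def by auto

lemma dist1_le: "z \<in> S \<Longrightarrow> dist1 y S \<le> norm1 (y - z)"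
  unfolding dist1_def by (rule cInf_lower) (auto intro: bdd_belowI[of _ 0] norm1_nonneg)

lemma dist1_attained:
  assumes "compact S" "S \<noteq> {}"
  obtains z where "z \<in> S" "dist1 y S = norm1 (y - z)"
proof -
  have "continuous_on S (\<lambda>z. norm1 (y - z))"
    unfolding norm1_def by (intro continuous_intros)
  then obtain z where z: "z \<in> S" "\<And>w. w \<in> S \<Longrightarrow> norm1 (y - z) \<le> norm1 (y - w)"
    using continuous_attains_inf[OF assms] by blast
  then have "dist1 y S = norm1 (y - z)"
    unfolding dist1_def by (intro cInf_eq_minimum) auto
  with z that show ?thesis by blast
qed

lemma dist1_pos:
  assumes "compact S" "S \<noteq> {}" "y \<notin> S" shows "0 < dist1 y S"
proof -
  obtain z where "z \<in> S" "dist1 y S = norm1 (y - z)"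
    using dist1_attained[OF assms(1,2)] .
  with assms(3) norm1_nonneg[of "y - z"] norm1_eq_0_iff[of "y - z"] show ?thesis by auto
qed

lemma inner_mult_vec_columns: "g \<bullet> (A *v x) = (\<Sum>i\<in>UNIV. x$i * (g \<bullet> column i A))"
  by (simp add: matrix_mult_sum scalar_mult_eq_scaleR inner_sum_right)

lemma std_simplex_sum_ge_min:
  assumes "x \<in> std_simplex" "\<And>i. h j \<le> h i"
  shows "h j \<le> (\<Sum>i\<in>UNIV. x$i * h i)"
proof -
  have "h j = (\<Sum>i\<in>UNIV. x$i * h j)"
    using assms(1) by (simp add: std_simplex_def sum_distrib_right[symmetric])
  also have "\<dots> \<le> (\<Sum>i\<in>UNIV. x$i * h i)"
    using assms by (intro sum_mono mult_left_mono) (auto simp: std_simplex_def)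
  finally show ?thesis .
qed

lemma std_simplex_sum_le_supp_max:
  assumes "x \<in> std_simplex" "\<And>i. i \<in> supp x \<Longrightarrow> h i \<le> h l"
  shows "(\<Sum>i\<in>UNIV. x$i * h i) \<le> h l"
proof -
  have "x$i * h i \<le> x$i * h l" for i
    using assms by (cases "0 < x$i") (auto simp: supp_def std_simplex_def order_le_less)
  then have "(\<Sum>i\<in>UNIV. x$i * h i) \<le> (\<Sum>i\<in>UNIV. x$i * h l)"
    by (rule sum_mono)
  also have "\<dots> = h l"
    using assms(1) by (simp add: std_simplex_def sum_distrib_right[symmetric])
  finally show ?thesis .
qed

text \<open>Since the coordinates of \<open>x - z\<close> sum to zero, their positive parts carry half of
  \<open>norm1 (x - z)\<close>, and they sit on the support of \<open>x\<close>.\<close>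

lemma std_simplex_diff_sum_le:
  assumes x: "x \<in> std_simplex" and z: "z \<in> std_simplex"
    and j: "\<And>i. h j \<le> h i" and l: "\<And>i. i \<in> supp x \<Longrightarrow> h i \<le> h l"
  shows "(\<Sum>i\<in>UNIV. (x - z)$i * h i) \<le> norm1 (x - z) / 2 * (h l - h j)"
proof -
  let ?d = "x - z"
  have sum0: "(\<Sum>i\<in>UNIV. ?d$i) = 0"
    using x z by (simp add: std_simplex_def sum_subtractf)
  have pos_part: "?d$i * (h i - h j) \<le> max (?d$i) 0 * (h l - h j)" for i
  proof (cases "0 < ?d$i")
    case True
    moreover have "0 \<le> z$i" using z by (simp add: std_simplex_def)
    ultimately have "i \<in> supp x" by (simp add: supp_def)
    with True j l show ?thesis by (simp add: mult_left_mono)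
  next
    case False
    with j show ?thesis by (simp add: mult_nonpos_nonneg)
  qed
  have "norm1 ?d = (\<Sum>i\<in>UNIV. 2 * max (?d$i) 0 - ?d$i)"
    unfolding norm1_def by (intro sum.cong) (auto simp: max_def abs_if)
  also have "\<dots> = 2 * (\<Sum>i\<in>UNIV. max (?d$i) 0)"
    using sum0 by (simp add: sum_subtractf sum_distrib_left)
  finally have norm1_pos_part: "(\<Sum>i\<in>UNIV. max (?d$i) 0) = norm1 ?d / 2" by simp
  have "(\<Sum>i\<in>UNIV. ?d$i * h i) = (\<Sum>i\<in>UNIV. ?d$i * (h i - h j))"
    using sum0 by (simp add: right_diff_distrib sum_subtractf sum_distrib_right[symmetric])
  also have "\<dots> \<le> (\<Sum>i\<in>UNIV. max (?d$i) 0) * (h l - h j)"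
    unfolding sum_distrib_right by (intro sum_mono pos_part)
  finally show ?thesis unfolding norm1_pos_part .
qed

text \<open>At most half of the first \<open>k\<close> steps can be drop steps, because \<open>s\<close> stays positive.\<close>

lemma linear_rate_with_drop_steps:
  fixes F :: "nat \<Rightarrow> real" and s :: "nat \<Rightarrow> nat" and is_drop :: "nat \<Rightarrow> bool" and r :: real
  assumes mono: "\<And>k. F (Suc k) \<le> F k"
    and contract: "\<And>k. \<not> is_drop k \<Longrightarrow> F (Suc k) \<le> r * F k"
    and s_drop: "\<And>k. is_drop k \<Longrightarrow> s (Suc k) + 1 \<le> s k"
    and s_Suc: "\<And>k. s (Suc k) \<le> s k + 1"
    and s_pos: "\<And>k. 0 < s k" and s0: "s 0 = 1"
    and r: "0 < r" "r \<le> 1" and F0: "0 \<le> F 0"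
  shows "F k \<le> r powr (real k / 2) * F 0"
proof -
  define G where "G k = card {i. i < k \<and> \<not> is_drop i}" for k
  have G_Suc: "G (Suc k) = (if is_drop k then G k else Suc (G k))" for k
  proof -
    have "{i. i < Suc k \<and> \<not> is_drop i} = (if is_drop k then {i. i < k \<and> \<not> is_drop i}
        else insert k {i. i < k \<and> \<not> is_drop i})"
      by (auto simp: less_Suc_eq)
    then show ?thesis by (simp add: G_def)
  qed
  have inv: "F k \<le> r ^ G k * F 0 \<and> s k + k \<le> 1 + 2 * G k" for k
  proof (induction k)
    case 0
    then show ?case by (simp add: G_def s0)
  next
    case (Suc k)
    show ?case
    proof (cases "is_drop k")
      case True
      with Suc mono[of k] s_drop[of k] G_Suc[of k] show ?thesis by fastforce
    next
      case False
      have "F (Suc k) \<le> r * (r ^ G k * F 0)"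
        using contract[OF False] Suc.IH r by (meson mult_left_mono order_trans less_imp_le)
      with False Suc.IH s_Suc[of k] G_Suc[of k] show ?thesis by simp
    qed
  qed
  have "real k / 2 \<le> real (G k)"
    using inv[of k] s_pos[of k] by linarith
  then have "r ^ G k \<le> r powr (real k / 2)"
    using r powr_mono'[of "real k / 2" "real (G k)" r] by (simp add: powr_realpow)
  with inv[of k] F0 show ?thesis by (meson mult_right_mono order_trans)
qed

locale away_step =
  fixes A :: "real^'n::finite^'m::finite" and df :: "real^'m \<Rightarrow> real^'m" and L :: real
    and x :: "real^'n" and j l :: 'n
  assumes x_simplex: "x \<in> std_simplex" and L_nonneg: "0 \<le> L"
    and j_argmin: "\<And>i. df (A *v x) \<bullet> column j A \<le> df (A *v x) \<bullet> column i A"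
    and l_supp: "l \<in> supp x"
    and l_argmax: "\<And>i. i \<in> supp x \<Longrightarrow> df (A *v x) \<bullet> column i A \<le> df (A *v x) \<bullet> column l A"
begin

text \<open>\<open>grad\<close> is \<open>\<nabla>f(u)\<close>, \<open>dir\<close> is the paper's \<open>w\<close> (so \<open>A *v dir\<close> is \<open>v\<close>), \<open>step_max\<close> is
  \<open>\<alpha>\<^sub>m\<^sub>a\<^sub>x\<close> and \<open>gain = -\<langle>\<nabla>f(u), v\<rangle>\<close>.\<close>

abbreviation x' :: "real^'n" where "x' \<equiv> fw_step A df L x j l"

definition grad :: "real^'m" where "grad = df (A *v x)"

definition score :: "'n \<Rightarrow> real" where "score i = grad \<bullet> column i A"

definition fw_chosen :: bool where
  "fw_chosen \<longleftrightarrow> grad \<bullet> (column j A - A *v x) < grad \<bullet> (A *v x - column l A) \<or> card (supp x) = 1"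

definition dir :: "real^'n" where
  "dir = (if fw_chosen then axis j 1 - x else x - axis l 1)"

definition step_max :: real where
  "step_max = (if fw_chosen then 1 else x$l / (1 - x$l))"

definition gain :: real where
  "gain = (if fw_chosen then grad \<bullet> (A *v x) - score j else score l - grad \<bullet> (A *v x))"

definition step_size :: real where
  "step_size = min step_max (gain / (4 * L))"

definition drop_step :: bool where
  "drop_step \<longleftrightarrow> \<not> fw_chosen \<and> step_size = step_max"

lemma fw_step_eq: "x' = x + step_size *\<^sub>R dir"
proof -
  have "- (grad \<bullet> (if fw_chosen then column j A - A *v x else A *v x - column l A)) = gain"
    by (simp add: gain_def score_def inner_diff_right)
  then show ?thesis
    unfolding fw_step_def Let_def grad_def[symmetric] fw_chosen_def[symmetric]
    by (simp add: step_size_def step_max_def dir_def)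
qed

lemma grad_inner_A_dir: "grad \<bullet> (A *v dir) = - gain"
  unfolding dir_def gain_def score_def
  by (simp add: matrix_vector_mult_diff_distrib matrix_vector_mult_basis inner_diff_right)

lemma score_j_min: "score j \<le> score i"
  using j_argmin by (simp add: score_def grad_def)

lemma score_l_max: "i \<in> supp x \<Longrightarrow> score i \<le> score l"
  using l_argmax by (simp add: score_def grad_def)

lemma score_bounds: "score j \<le> grad \<bullet> (A *v x)" "grad \<bullet> (A *v x) \<le> score l"
  using std_simplex_sum_ge_min[OF x_simplex, of score j, OF score_j_min]
    std_simplex_sum_le_supp_max[OF x_simplex, of score l, OF score_l_max]
  by (simp_all add: inner_mult_vec_columns score_def)

lemma gain_nonneg: "0 \<le> gain"
  using score_bounds by (simp add: gain_def)

lemma x_eq_axis_if_card_supp_1: "card (supp x) = 1 \<Longrightarrow> x = axis l 1"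
  using l_supp by (intro std_simplex_supp_singleton[OF x_simplex]) (auto simp: card_1_singleton_iff)

text \<open>The chosen direction gains at least the average of the Frank-Wolfe and the away
  direction, whose gains add up to \<open>score l - score j\<close>.\<close>

lemma score_gap_le_gain: "score l - score j \<le> 2 * gain"
proof (cases "fw_chosen \<and> card (supp x) = 1")
  case True
  then have "A *v x = column l A"
    using x_eq_axis_if_card_supp_1 by (simp add: matrix_vector_mult_basis)
  then have "grad \<bullet> (A *v x) = score l" by (simp add: score_def)
  with True show ?thesis using gain_nonneg by (simp add: gain_def)
next
  case False
  then show ?thesis
    by (auto simp: gain_def fw_chosen_def score_def inner_diff_right)
qed

lemma x_l_less_1: "\<not> fw_chosen \<Longrightarrow> x$l < 1"
  using std_simplex_eq_axis[OF x_simplex, of l] by (force simp: fw_chosen_def supp_axis)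

lemma step_size_nonneg: "0 \<le> step_size"
  using x_l_less_1 gain_nonneg L_nonneg l_supp
  by (auto simp: step_size_def step_max_def supp_def)

lemma step_size_le_max: "step_size \<le> step_max"
  by (simp add: step_size_def)

lemma x'_coord_away:
  "\<not> fw_chosen \<Longrightarrow> x'$i = (1 + step_size) * x$i - (if i = l then step_size else 0)"
  by (simp add: fw_step_eq dir_def axis_def algebra_simps)

lemma fw_step_in_std_simplex: "x' \<in> std_simplex"
proof (cases fw_chosen)
  case True
  then have "x' = (1 - step_size) *\<^sub>R x + step_size *\<^sub>R axis j 1"
    by (simp add: fw_step_eq dir_def algebra_simps)
  moreover have "step_size \<le> 1"
    using True step_size_le_max by (simp add: step_max_def)
  ultimately show ?thesis
    using convexD_alt[OF convex_std_simplex x_simplex axis_in_std_simplex] step_size_nonneg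
    by simp
next
  case False
  have "step_size * (1 - x$l) \<le> x$l"
    using step_size_le_max False x_l_less_1 by (simp add: step_max_def pos_le_divide_eq)
  then have "0 \<le> x'$i" for i
    using False x_simplex step_size_nonneg
    by (auto simp: x'_coord_away std_simplex_def algebra_simps)
  moreover have "(\<Sum>i\<in>UNIV. x'$i) = 1"
    using x_simplex by (simp add: fw_step_eq dir_def std_simplex_def sum.distrib sum_subtractf
        sum_distrib_left[symmetric] axis_def)
  ultimately show ?thesis by (simp add: std_simplex_def)
qed

lemma norm1_fw_step_diff: "norm1 (x' - x) \<le> 2 * step_size"
proof -
  have dir: "norm1 dir \<le> 2"
    using norm1_diff_le[of "axis j 1" x] norm1_diff_le[of x "axis l 1"]
    by (simp add: dir_def norm1_std_simplex[OF x_simplex] norm1_std_simplex[OF axis_in_std_simplex])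
  moreover have "norm1 (x' - x) = step_size * norm1 dir"
    using step_size_nonneg by (simp add: fw_step_eq norm1_scaleR)
  ultimately show ?thesis
    using mult_left_mono[OF dir step_size_nonneg] by (simp add: mult.commute)
qed

lemma grad_inner_fw_step: "grad \<bullet> (A *v x' - A *v x) = - step_size * gain"
  by (simp add: fw_step_eq matrix_vector_right_distrib matrix_vector_mult_scaleR grad_inner_A_dir)

lemma supp_fw_step: "supp x' \<subseteq> insert j (supp x)"
proof
  fix i assume i: "i \<in> supp x'"
  show "i \<in> insert j (supp x)"
  proof (rule ccontr)
    assume "i \<notin> insert j (supp x)"
    then have "i \<noteq> j" "x$i = 0"
      using x_simplex by (auto simp: supp_def std_simplex_def order_le_less)
    then have "x'$i \<le> 0"
      using step_size_nonneg by (simp add: fw_step_eq dir_def axis_def)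
    with i show False by (simp add: supp_def)
  qed
qed


lemma supp_fw_step_drop: "drop_step \<Longrightarrow> supp x' \<subseteq> supp x - {l}"
proof
  fix i assume drop: drop_step and i: "i \<in> supp x'"
  then have away: "\<not> fw_chosen" and size: "step_size = x$l / (1 - x$l)"
    by (auto simp: drop_step_def step_max_def)
  have "x'$l = 0"
    using x_l_less_1[OF away] by (simp add: x'_coord_away[OF away] size field_simps)
  with i have "i \<noteq> l" by (auto simp: supp_def)
  with i have "0 < (1 + step_size) * x$i"
    by (simp add: supp_def x'_coord_away[OF away])
  then have "0 < x$i"
    using step_size_nonneg by (simp add: zero_less_mult_iff)
  with \<open>i \<noteq> l\<close> show "i \<in> supp x - {l}" by (simp add: supp_def)
qed

lemma card_supp_fw_step: "card (supp x') \<le> card (supp x) + 1"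
proof -
  have "card (supp x') \<le> card (insert j (supp x))"
    by (intro card_mono supp_fw_step) simp
  then show ?thesis by (simp add: card_insert_if split: if_splits)
qed

lemma card_supp_fw_step_drop: "drop_step \<Longrightarrow> card (supp x') + 1 \<le> card (supp x)"
  using card_mono[OF _ supp_fw_step_drop] card_supp_pos[OF x_simplex] l_supp by fastforce

lemma capped_step_is_full_fw_step:
  assumes "\<not> drop_step" "step_size < gain / (4 * L)"
  shows "fw_chosen" "step_size = 1"
  using assms by (auto simp: drop_step_def step_size_def step_max_def min_def split: if_splits)
end

locale away_step_descent = away_step A df L x j l
  for A :: "real^'n::finite^'m::finite" and df L x j l +
  fixes f :: "real^'m \<Rightarrow> real" and fmin mu :: real
  assumes gradient_ineq:
      "\<And>y. y \<in> std_simplex \<Longrightarrow> f (A *v x) + df (A *v x) \<bullet> (A *v y - A *v x) \<le> f (A *v y)"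
    and smooth: "\<And>y. 0 < L \<Longrightarrow> y \<in> std_simplex \<Longrightarrow>
      f (A *v y) - f (A *v x) - df (A *v x) \<bullet> (A *v y - A *v x) \<le> L / 2 * (norm1 (y - x))\<^sup>2"
    and fmin_le: "\<And>y. y \<in> std_simplex \<Longrightarrow> fmin \<le> f (A *v y)"
    and mu_nonneg: "0 \<le> mu"
    and sharp: "\<exists>z\<in>std_simplex. f (A *v z) = fmin \<and> mu / 2 * (norm1 (x - z))\<^sup>2 \<le> f (A *v x) - fmin"
begin

lemma descent:
  assumes "0 < L"
  shows "f (A *v x') - f (A *v x) \<le> - step_size * gain + 2 * L * step_size\<^sup>2"
proof -
  have "(norm1 (x' - x))\<^sup>2 \<le> (2 * step_size)\<^sup>2"
    using norm1_fw_step_diff norm1_nonneg by (intro power_mono)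
  then have "L / 2 * (norm1 (x' - x))\<^sup>2 \<le> 2 * L * step_size\<^sup>2"
    using assms by (simp add: power_mult_distrib)
  with smooth[OF assms fw_step_in_std_simplex] grad_inner_fw_step show ?thesis
    by (simp add: grad_def)
qed

lemma f_fw_step_le: "f (A *v x') \<le> f (A *v x)"
proof (cases "L = 0")
  case True
  have "step_size \<le> gain / (4 * L)" by (simp add: step_size_def)
  with True have "step_size = 0"
    using step_size_nonneg by simp
  then show ?thesis by (simp add: fw_step_eq)
next
  case False
  then have L: "0 < L" using L_nonneg by simp
  have "step_size \<le> gain / (4 * L)" by (simp add: step_size_def)
  then have "2 * L * step_size \<le> gain"
    using L gain_nonneg by (simp add: field_simps)
  from mult_left_mono[OF this step_size_nonneg]
  have "2 * L * step_size\<^sup>2 \<le> step_size * gain"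
    by (simp add: power2_eq_square algebra_simps)
  with descent[OF L] show ?thesis by simp
qed

lemma gap_le_dist_gain:
  assumes "z \<in> std_simplex" "f (A *v z) = fmin"
  shows "f (A *v x) - fmin \<le> norm1 (x - z) * gain"
proof -
  have "f (A *v x) - fmin \<le> grad \<bullet> (A *v x - A *v z)"
    using gradient_ineq[OF assms(1)] assms(2) by (simp add: grad_def inner_diff_right)
  also have "\<dots> = (\<Sum>i\<in>UNIV. (x - z)$i * score i)"
    by (simp add: matrix_vector_mult_diff_distrib[symmetric] inner_mult_vec_columns score_def)
  also have "\<dots> \<le> norm1 (x - z) / 2 * (score l - score j)"
    by (rule std_simplex_diff_sum_le[OF x_simplex assms(1) score_j_min score_l_max])
  also have "\<dots> \<le> norm1 (x - z) * gain"
    using mult_left_mono[OF score_gap_le_gain norm1_nonneg[of "x - z"]] by simp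
  finally show ?thesis .
qed

lemma sharpness_gain: "mu * (f (A *v x) - fmin) \<le> 2 * gain\<^sup>2"
proof -
  obtain z where z: "z \<in> std_simplex" "f (A *v z) = fmin"
    and sharp_z: "mu / 2 * (norm1 (x - z))\<^sup>2 \<le> f (A *v x) - fmin"
    using sharp by blast
  define F d where "F = f (A *v x) - fmin" and "d = norm1 (x - z)"
  have F: "0 \<le> F" using fmin_le[OF x_simplex] by (simp add: F_def)
  have "F\<^sup>2 \<le> (d * gain)\<^sup>2"
    using gap_le_dist_gain[OF z] F by (intro power_mono) (simp_all add: F_def d_def)
  then have "mu * F\<^sup>2 \<le> mu * (d * gain)\<^sup>2"
    by (rule mult_left_mono[OF _ mu_nonneg])
  also have "\<dots> = 2 * (mu / 2 * d\<^sup>2) * gain\<^sup>2"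
    by (simp add: power_mult_distrib)
  also have "\<dots> \<le> 2 * F * gain\<^sup>2"
    using sharp_z by (intro mult_right_mono) (simp_all add: F_def d_def)
  finally have "F * (mu * F) \<le> F * (2 * gain\<^sup>2)"
    by (simp add: power2_eq_square algebra_simps)
  then show ?thesis
    using F by (cases "F = 0") (simp_all add: F_def mu_nonneg)
qed

lemma fw_gap_le_gain: "fw_chosen \<Longrightarrow> f (A *v x) - fmin \<le> gain"
proof -
  obtain z where z: "z \<in> std_simplex" "f (A *v z) = fmin"
    using sharp by blast
  have "f (A *v x) - fmin \<le> grad \<bullet> (A *v x) - grad \<bullet> (A *v z)"
    using gradient_ineq[OF z(1)] z(2) by (simp add: grad_def inner_diff_right)
  moreover have "score j \<le> grad \<bullet> (A *v z)"
    using std_simplex_sum_ge_min[OF z(1), of score j, OF score_j_min] by (simp add: inner_mult_vec_columns score_def)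
  ultimately show "fw_chosen \<Longrightarrow> ?thesis" by (simp add: gain_def)
qed

lemma contraction:
  assumes "\<not> drop_step"
  shows "f (A *v x') - fmin \<le> (1 - min (mu / (16 * L)) (1/2)) * (f (A *v x) - fmin)"
proof -
  define F where "F = f (A *v x) - fmin"
  have F: "0 \<le> F" using fmin_le[OF x_simplex] by (simp add: F_def)
  consider "L = 0" | "0 < L" "step_size = gain / (4 * L)" | "0 < L" "step_size < gain / (4 * L)"
    using L_nonneg by (fastforce simp: step_size_def)
  then have "f (A *v x') - f (A *v x) \<le> - min (mu / (16 * L)) (1/2) * F"
  proof cases
    case 1
    then show ?thesis using f_fw_step_le by simp
  next
    case 2
    have "f (A *v x') - f (A *v x) \<le> - gain\<^sup>2 / (8 * L)"
      using descent[OF 2(1)] 2 by (simp add: power2_eq_square field_simps)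
    also have "\<dots> \<le> - (mu / (16 * L)) * F"
      using divide_right_mono[OF sharpness_gain, of "16 * L"] 2(1) by (simp add: F_def)
    also have "\<dots> \<le> - min (mu / (16 * L)) (1/2) * F"
      using mult_right_mono[OF min.cobounded1 F, of "mu / (16 * L)" "1/2"] by simp
    finally show ?thesis .
  next
    case 3
    note full = capped_step_is_full_fw_step[OF assms 3(2)]
    have "f (A *v x') - f (A *v x) \<le> - gain + 2 * L"
      using descent[OF 3(1)] full by simp
    also have "\<dots> \<le> - F / 2"
      using 3 full fw_gap_le_gain by (simp add: F_def field_simps)
    also have "\<dots> \<le> - min (mu / (16 * L)) (1/2) * F"
      using mult_right_mono[OF min.cobounded2 F, of "mu / (16 * L)" "1/2"] by simp
    finally show ?thesis .
  qed
  then show ?thesis by (simp add: F_def algebra_simps)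
qed
end

lemma away_steps_linear_rate:
  fixes x :: "nat \<Rightarrow> real^'n::finite" and A :: "real^'n^'m::finite"
  assumes step: "\<And>k. x k \<in> std_simplex \<Longrightarrow> away_step_descent A df L (x k) (j k) (l k) f fmin mu"
    and iter: "\<And>k. x (Suc k) = fw_step A df L (x k) (j k) (l k)"
    and x0: "x 0 = axis i 1"
  shows "f (A *v x k) - fmin
    \<le> (1 - min (mu / (16 * L)) (1/2)) powr (real k / 2) * (f (A *v x 0) - fmin)"
proof -
  have simplex: "x k \<in> std_simplex" for k
  proof (induction k)
    case 0
    then show ?case using x0 axis_in_std_simplex by simp
  next
    case (Suc k)
    then show ?case
      using away_step.fw_step_in_std_simplex[OF away_step_descent.axioms(1)[OF step]] iter by simp
  qed
  note S = step[OF simplex]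
  note S' = away_step_descent.axioms(1)[OF S]
  have "0 \<le> mu" "0 \<le> L"
    using away_step_descent.mu_nonneg[OF S] away_step.L_nonneg[OF S'] by (auto simp: iter)
  then have rate: "0 < 1 - min (mu / (16 * L)) (1/2)" "1 - min (mu / (16 * L)) (1/2) \<le> 1"
    by auto
  have s0: "card (supp (x 0)) = 1"
    using x0 by (simp add: supp_axis)
  show ?thesis
  proof (rule linear_rate_with_drop_steps[where s = "\<lambda>k. card (supp (x k))"
        and is_drop = "\<lambda>k. away_step.drop_step A df L (x k) (j k) (l k)"])
  qed (use away_step_descent.f_fw_step_le[OF S] away_step_descent.contraction[OF S]
      away_step.card_supp_fw_step_drop[OF S'] away_step.card_supp_fw_step[OF S']
      card_supp_pos[OF simplex] away_step_descent.fmin_le[OF S simplex]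
      rate s0 in \<open>simp_all add: iter\<close>)
qed

lemma fstar_minimum:
  fixes A :: "real^'n::finite^'m::finite"
  assumes "continuous_on std_simplex (\<lambda>z. f (A *v z))"
  obtains xm where "xm \<in> std_simplex" "f (A *v xm) = fstar A f"
    "\<And>y. y \<in> std_simplex \<Longrightarrow> fstar A f \<le> f (A *v y)"
proof -
  obtain xm where xm: "xm \<in> std_simplex" "\<And>y. y \<in> std_simplex \<Longrightarrow> f (A *v xm) \<le> f (A *v y)"
    using continuous_attains_inf[OF compact_std_simplex _ assms] axis_in_std_simplex by blast
  then have "fstar A f = f (A *v xm)"
    unfolding fstar_def by (intro cInf_eq_minimum) auto
  with xm that show ?thesis by simp
qed

lemma compact_level_set_std_simplex:
  fixes g :: "real^'n::finite \<Rightarrow> 'a::t1_space"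
  assumes "continuous_on std_simplex g"
  shows "compact {z \<in> std_simplex. g z = c}"
proof -
  have "closed {z \<in> std_simplex. g z = c}"
    using continuous_closed_preimage_constant[OF assms compact_imp_closed[OF compact_std_simplex]] .
  from compact_Int_closed[OF compact_std_simplex this] show ?thesis
    by (simp add: Int_absorb1 subset_iff)
qed

lemma compact_Zset: "compact (Zset A u)"
  unfolding Zset_def by (intro compact_level_set_std_simplex continuous_intros)

lemma L_fA_nonneg:
  fixes A :: "real^'n::finite^'m::finite"
  assumes two_cols: "\<exists>i i'. column i A \<noteq> column i' A"
    and convex: "\<And>y y'. y \<in> std_simplex \<Longrightarrow> y' \<in> std_simplex \<Longrightarrow>
      f (A *v y) + df (A *v y) \<bullet> (A *v y' - A *v y) \<le> f (A *v y')"
  shows "0 \<le> L_fA A f df"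
proof -
  obtain i i' where cols: "column i A \<noteq> column i' A" using two_cols by blast
  define u y where "u = A *v axis i 1" and "y = axis i' (1::real)"
  have u: "u \<in> convA A"
    using axis_in_std_simplex by (auto simp: u_def convA_def)
  have y: "y \<in> std_simplex - Zset A u"
    using axis_in_std_simplex cols by (auto simp: y_def u_def Zset_def matrix_vector_mult_basis)
  have "0 \<le> f (A *v y) - f u - df u \<bullet> (A *v y - u)"
    using convex[OF axis_in_std_simplex axis_in_std_simplex, of i i'] by (simp add: u_def y_def)
  then have "0 \<le> ereal (2 * (f (A *v y) - f u - df u \<bullet> (A *v y - u)) / (dist1 y (Zset A u))\<^sup>2)"
    by simp
  then show ?thesis
    unfolding L_fA_def by (intro SUP_upper2[OF u] SUP_upper2[OF y])
qed

text \<open>For \<open>y\<close> in \<open>Zset A (A *v z)\<close> the left-hand side vanishes; otherwise \<open>z\<close> bounds the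
  distance of \<open>y\<close> to that set from above.\<close>

lemma L_fA_smooth:
  fixes A :: "real^'n::finite^'m::finite"
  assumes L: "0 < real_of_ereal (L_fA A f df)" and y: "y \<in> std_simplex" and z: "z \<in> std_simplex"
  shows "f (A *v y) - f (A *v z) - df (A *v z) \<bullet> (A *v y - A *v z)
    \<le> real_of_ereal (L_fA A f df) / 2 * (norm1 (y - z))\<^sup>2"
proof (cases "y \<in> Zset A (A *v z)")
  case True
  then show ?thesis using L by (simp add: Zset_def)
next
  case False
  define u B d where "u = A *v z" and "B = f (A *v y) - f u - df u \<bullet> (A *v y - u)"
    and "d = dist1 y (Zset A u)"
  have zZ: "z \<in> Zset A u" using z by (simp add: Zset_def u_def)
  have d: "0 < d" "d \<le> norm1 (y - z)"
    using dist1_pos[OF compact_Zset _ False] dist1_le[OF zZ] zZ by (auto simp: d_def u_def)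
  have "ereal (2 * B / d\<^sup>2) \<le> L_fA A f df"
    unfolding L_fA_def B_def d_def
    using y z False by (intro SUP_upper2[of u] SUP_upper2[of y]) (auto simp: convA_def u_def)
  with L have "2 * B / d\<^sup>2 \<le> real_of_ereal (L_fA A f df)"
    by (cases "L_fA A f df") auto
  with d(1) have "B \<le> real_of_ereal (L_fA A f df) / 2 * d\<^sup>2"
    by (simp add: field_simps)
  also have "\<dots> \<le> real_of_ereal (L_fA A f df) / 2 * (norm1 (y - z))\<^sup>2"
    using d L by (intro mult_left_mono power_mono) auto
  finally show ?thesis by (simp add: B_def u_def)
qed

lemma mu_star_nonneg:
  assumes "\<And>y. y \<in> std_simplex \<Longrightarrow> fstar A f \<le> f (A *v y)"
  shows "0 \<le> mu_star A f"
  unfolding mu_star_def using assms by (intro INF_greatest) auto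

lemma mu_star_sharp:
  fixes A :: "real^'n::finite^'m::finite"
  assumes cont: "continuous_on std_simplex (\<lambda>z. f (A *v z))" and y: "y \<in> std_simplex"
  shows "\<exists>z\<in>std_simplex. f (A *v z) = fstar A f
    \<and> real_of_ereal (mu_star A f) / 2 * (norm1 (y - z))\<^sup>2 \<le> f (A *v y) - fstar A f"
proof -
  obtain xm where xm: "xm \<in> std_simplex" "f (A *v xm) = fstar A f"
    and fstar_le: "\<And>y. y \<in> std_simplex \<Longrightarrow> fstar A f \<le> f (A *v y)"
    using fstar_minimum[OF cont] by blast
  show ?thesis
  proof (cases "y \<in> Zstar A f")
    case True
    then show ?thesis by (intro bexI[of _ y]) (auto simp: Zstar_def norm1_def)
  next
    case False
    have "compact (Zstar A f)" "Zstar A f \<noteq> {}"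
      using compact_level_set_std_simplex[OF cont] xm by (auto simp: Zstar_def)
    then obtain z where z: "z \<in> Zstar A f" and dz: "dist1 y (Zstar A f) = norm1 (y - z)"
      by (rule dist1_attained)
    have d: "0 < norm1 (y - z)"
      using dist1_pos[OF \<open>compact (Zstar A f)\<close> \<open>Zstar A f \<noteq> {}\<close> False] dz by simp
    have "mu_star A f \<le> ereal (2 * (f (A *v y) - fstar A f) / (norm1 (y - z))\<^sup>2)"
      unfolding mu_star_def using y False dz by (intro INF_lower2[of y]) auto
    then have "real_of_ereal (mu_star A f) \<le> 2 * (f (A *v y) - fstar A f) / (norm1 (y - z))\<^sup>2"
      using fstar_le[OF y] by (cases "mu_star A f") auto
    with d have "real_of_ereal (mu_star A f) / 2 * (norm1 (y - z))\<^sup>2 \<le> f (A *v y) - fstar A f"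
      by (simp add: field_simps)
    with z show ?thesis by (auto simp: Zstar_def)
  qed
qed

theorem proposition3:
  fixes A :: "real^'n::finite^'m::finite"
    and f :: "real^'m \<Rightarrow> real" and df :: "real^'m \<Rightarrow> real^'m"
    and D :: "(real^'m) set"
    and x :: "nat \<Rightarrow> real^'n" and j l :: "nat \<Rightarrow> 'n"
  assumes two_cols: "\<exists>i i'. column i A \<noteq> column i' A"
    and D_open: "open D" and D_convex: "convex D" and conv_sub: "convA A \<subseteq> D"
    and f_convex: "convex_on D f"
    and f_grad: "\<forall>u\<in>D. (f has_derivative (\<lambda>h. df u \<bullet> h)) (at u)"
    and ratio: "L_fA A f df / mu_star A f < \<infinity>"
    and x0_vertex: "\<exists>i. x 0 = axis i 1"
    and j_argmin: "\<forall>k i. df (A *v x k) \<bullet> column (j k) A \<le> df (A *v x k) \<bullet> column i A"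
    and l_argmax: "\<forall>k. l k \<in> supp (x k) \<and>
                     (\<forall>i\<in>supp (x k). df (A *v x k) \<bullet> column i A \<le> df (A *v x k) \<bullet> column (l k) A)"
    and iter: "\<forall>k. x (Suc k) = fw_step A df (real_of_ereal (L_fA A f df)) (x k) (j k) (l k)"
  shows "\<forall>k. f (A *v x k) - fstar A f
           \<le> (1 - min (real_of_ereal (mu_star A f) / (16 * real_of_ereal (L_fA A f df))) (1/2))
                powr (real k / 2) * (f (A *v x 0) - fstar A f)"
proof -
  have in_D: "A *v y \<in> D" if "y \<in> std_simplex" for y
    using conv_sub that by (auto simp: convA_def)
  have "continuous_on D f"
    using f_grad has_derivative_continuous continuous_at_imp_continuous_on by blast
  then have cont: "continuous_on std_simplex (\<lambda>z. f (A *v z))"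
    by (rule continuous_on_compose2) (auto intro!: continuous_intros in_D)
  have convex: "f (A *v y) + df (A *v y) \<bullet> (A *v y' - A *v y) \<le> f (A *v y')"
    if "y \<in> std_simplex" "y' \<in> std_simplex" for y y'
    using convex_on_gradient_inequality[OF f_convex] f_grad in_D that by blast
  have fstar_le: "\<And>y. y \<in> std_simplex \<Longrightarrow> fstar A f \<le> f (A *v y)"
    using fstar_minimum[OF cont] by metis
  have "away_step_descent A df (real_of_ereal (L_fA A f df)) (x k) (j k) (l k)
      f (fstar A f) (real_of_ereal (mu_star A f))" if "x k \<in> std_simplex" for k
  proof unfold_locales
    show "x k \<in> std_simplex" by (rule that)
    show "0 \<le> real_of_ereal (L_fA A f df)"
      using L_fA_nonneg[OF two_cols convex] by (rule real_of_ereal_pos)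
    show "0 \<le> real_of_ereal (mu_star A f)"
      using mu_star_nonneg[OF fstar_le] by (rule real_of_ereal_pos)
  qed (use that j_argmin l_argmax convex L_fA_smooth fstar_le mu_star_sharp[OF cont] in auto)
  then have "f (A *v x k) - fstar A f
      \<le> (1 - min (real_of_ereal (mu_star A f) / (16 * real_of_ereal (L_fA A f df))) (1/2))
        powr (real k / 2) * (f (A *v x 0) - fstar A f)" for k
    using away_steps_linear_rate iter x0_vertex by metis
  then show ?thesis by blast
qed

end
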